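(* Let $\mu,\nu$ be finite measures on $\mathbb R$ with finite first moments, and suppose $\mu\le_E\nu$. Then $(P_\nu-P_\mu)^c\in\mathcal D(\nu(\mathbb R)-\mu(\mathbb R),\overline{\nu}-\overline{\mu})$.
   Context: For a finite measure $\eta$ on $\mathbb R$ with finite first moment, $\overline\eta=\int x\,\eta(dx)$ and $P_\eta(k)=\int(k-x)^+\eta(dx)$, $k\in\mathbb R$. We write $\mu\le_E\nu$ (extended convex order) if $\int f\,d\mu\le\int f\,d\nu$ for all non-negative convex $f:\mathbb R\to\mathbb R_+$. For $u:\mathbb R\to\mathbb R$, $u^c$ is the largest convex function below $u$. For $\alpha\ge0,\beta\in\mathbb R$, $\mathcal D(\alpha,\beta)$ is the set of increasing convex functions $f:\mathbb R\to\mathbb R_+$ with $\lim_{z\to-\infty}f(z)=0$ and $\lim_{z\to\infty}\{f(z)-(\alpha z-\beta)\}=0$. *)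

theory Defs
  imports "HOL-Probability.Probability"
begin

definition fin_meas_fm :: "real measure \<Rightarrow> bool" where
  "fin_meas_fm M \<longleftrightarrow> sets M = sets borel \<and> finite_measure M \<and> integrable M (\<lambda>x. x)"

definition bary :: "real measure \<Rightarrow> real" where
  "bary M = (\<integral>x. x \<partial>M)"

definition put_fn :: "real measure \<Rightarrow> real \<Rightarrow> real" where
  "put_fn M k = (\<integral>x. max (k - x) 0 \<partial>M)"

text \<open>Extended convex order: integrals of non-negative convex functions
  (possibly infinite, hence taken as non-negative integrals).\<close>
definition ext_cx_le :: "real measure \<Rightarrow> real measure \<Rightarrow> bool" where
  "ext_cx_le M N \<longleftrightarrow>
     (\<forall>f::real \<Rightarrow> real. convex_on UNIV f \<and> (\<forall>x. 0 \<le> f x) \<longrightarrow>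
        (\<integral>\<^sup>+ x. ennreal (f x) \<partial>M) \<le> (\<integral>\<^sup>+ x. ennreal (f x) \<partial>N))"

definition convex_minorant :: "(real \<Rightarrow> real) \<Rightarrow> real \<Rightarrow> real" where
  "convex_minorant u x = Sup {g x | g. convex_on UNIV g \<and> (\<forall>y. g y \<le> u y)}"

definition classD :: "real \<Rightarrow> real \<Rightarrow> (real \<Rightarrow> real) set" where
  "classD \<alpha> \<beta> = {f. mono f \<and> convex_on UNIV f \<and> (\<forall>z. 0 \<le> f z) \<and>
      (f \<longlongrightarrow> 0) at_bot \<and> ((\<lambda>z. f z - (\<alpha> * z - \<beta>)) \<longlongrightarrow> 0) at_top}"

end

theory Submission
  imports Defs "HOL-Real_Asymp.Real_Asymp"
begin

text \<open>By put-call parity \<open>P\<^sub>\<nu> k - P\<^sub>\<mu> k = (\<alpha> k - \<beta>) + (C\<^sub>\<nu> k - C\<^sub>\<mu> k)\<close>, where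
  \<open>C\<^sub>\<eta> k = \<integral>(x - k)\<^sup>+ d\<eta>\<close> is the call price. The payoffs \<open>(k - x)\<^sup>+\<close> and \<open>(x - k)\<^sup>+\<close> are
  non-negative and convex, so the extended convex order gives \<open>P\<^sub>\<nu> - P\<^sub>\<mu> \<ge> max 0 (\<alpha> k - \<beta>)\<close>.
  This lower bound is convex, so the convex minorant lies between it and \<open>P\<^sub>\<nu> - P\<^sub>\<mu>\<close>; by
  dominated convergence the two bounds merge at \<open>-\<infinity>\<close> (both tend to \<open>0\<close>) and at \<open>+\<infinity>\<close>
  (their difference \<open>C\<^sub>\<nu> - C\<^sub>\<mu>\<close> tends to \<open>0\<close>). Finally, a convex function with a finite
  limit at \<open>-\<infinity>\<close> is increasing.\<close>

lemma convex_on_max: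
  fixes f g :: "'a::real_vector \<Rightarrow> real"
  assumes "convex_on S f" "convex_on S g"
  shows "convex_on S (\<lambda>x. max (f x) (g x))"
proof (rule convex_onI)
  show "convex S" using assms(1) by (rule convex_on_imp_convex)
next
  fix t :: real and x y assume t: "0 < t" "t < 1" and xy: "x \<in> S" "y \<in> S"
  have "f ((1 - t) *\<^sub>R x + t *\<^sub>R y) \<le> (1 - t) * max (f x) (g x) + t * max (f y) (g y)"
    using convex_onD[OF assms(1), of t x y] t xy
    by (smt (verit) max.cobounded1 mult_left_mono)
  moreover have "g ((1 - t) *\<^sub>R x + t *\<^sub>R y) \<le> (1 - t) * max (f x) (g x) + t * max (f y) (g y)"
    using convex_onD[OF assms(2), of t x y] t xy
    by (smt (verit) max.cobounded2 mult_left_mono)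
  ultimately show "max (f ((1 - t) *\<^sub>R x + t *\<^sub>R y)) (g ((1 - t) *\<^sub>R x + t *\<^sub>R y))
      \<le> (1 - t) * max (f x) (g x) + t * max (f y) (g y)"
    by simp
qed

lemma convex_on_affine: "convex_on UNIV (\<lambda>x::real. a * x + b)"
  by (rule convex_onI) (auto simp: algebra_simps)

lemma convex_on_pos_part_affine: "convex_on UNIV (\<lambda>x::real. max (a * x + b) 0)"
  by (intro convex_on_max convex_on_affine) (simp add: convex_on_const)

lemma convex_on_tendsto_at_bot_imp_mono:
  fixes f :: "real \<Rightarrow> real"
  assumes "convex_on UNIV f" "(f \<longlongrightarrow> l) at_bot"
  shows "mono f"
proof (rule monoI)
  fix x y :: real assume "x \<le> y"
  have "filterlim (\<lambda>z. y - z) at_infinity at_bot"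
    by (rule filterlim_at_top_imp_at_infinity) real_asymp
  then have "((\<lambda>z. (f z - f y) / (y - z) * (y - x) + f y) \<longlongrightarrow> 0 * (y - x) + f y) at_bot"
    by (intro tendsto_intros tendsto_divide_0[OF tendsto_diff[OF assms(2) tendsto_const]])
  moreover have "\<forall>\<^sub>F z in at_bot. f x \<le> (f z - f y) / (y - z) * (y - x) + f y"
    using eventually_le_at_bot[of x]
  proof eventually_elim
    case (elim z)
    show ?case
      using convex_onD_Icc''[OF convex_on_subset[OF assms(1)], of z y x] elim \<open>x \<le> y\<close> by simp
  qed
  ultimately show "f x \<le> f y"
    by (simp add: tendsto_lowerbound)
qed

lemma convex_minorant_ge:
  assumes "convex_on UNIV g" "\<And>y. g y \<le> u y"
  shows "g x \<le> convex_minorant u x"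
  unfolding convex_minorant_def
  by (rule cSup_upper) (use assms in \<open>auto intro!: bdd_aboveI[of _ "u x"]\<close>)

lemma convex_minorant_le:
  assumes "convex_on UNIV g" "\<And>y. g y \<le> u y"
  shows "convex_minorant u x \<le> u x"
  unfolding convex_minorant_def
  by (rule cSup_least) (use assms in auto)

lemma convex_on_convex_minorant:
  assumes "convex_on UNIV g" "\<And>y. g y \<le> u y"
  shows "convex_on UNIV (convex_minorant u)"
proof (rule convex_onI)
  fix t x y :: real assume t: "0 < t" "t < 1"
  let ?z = "(1 - t) *\<^sub>R x + t *\<^sub>R y"
  show "convex_minorant u ?z \<le> (1 - t) * convex_minorant u x + t * convex_minorant u y"
    unfolding convex_minorant_def[of u ?z]
  proof (rule cSup_least)
    show "{h ?z |h. convex_on UNIV h \<and> (\<forall>y. h y \<le> u y)} \<noteq> {}"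
      using assms by auto
  next
    fix v assume "v \<in> {h ?z |h. convex_on UNIV h \<and> (\<forall>y. h y \<le> u y)}"
    then obtain h where h: "convex_on UNIV h" "\<And>y. h y \<le> u y" and v: "v = h ?z"
      by auto
    have "v \<le> (1 - t) * h x + t * h y"
      unfolding v using convex_onD[OF h(1)] t by auto
    also have "\<dots> \<le> (1 - t) * convex_minorant u x + t * convex_minorant u y"
      using convex_minorant_ge[OF h] t by (intro add_mono mult_left_mono) auto
    finally show "v \<le> (1 - t) * convex_minorant u x + t * convex_minorant u y" .
  qed
qed simp

lemma convex_minorant_in_classD:
  fixes u :: "real \<Rightarrow> real"
  assumes nonneg: "\<And>k. 0 \<le> u k" and bot: "(u \<longlongrightarrow> 0) at_bot"
    and above_affine: "\<And>k. \<alpha> * k - \<beta> \<le> u k"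
    and top: "((\<lambda>k. u k - (\<alpha> * k - \<beta>)) \<longlongrightarrow> 0) at_top"
  shows "convex_minorant u \<in> classD \<alpha> \<beta>"
proof -
  define f where "f = convex_minorant u"
  have zero: "convex_on UNIV (\<lambda>k. 0::real)"
    by (simp add: convex_on_const)
  have affine: "convex_on UNIV (\<lambda>k. \<alpha> * k - \<beta>)"
    using convex_on_affine[of \<alpha> "- \<beta>"] by simp
  have convex: "convex_on UNIV f"
    unfolding f_def using zero nonneg by (rule convex_on_convex_minorant)
  have f_nonneg: "0 \<le> f k" for k
    unfolding f_def using zero nonneg by (rule convex_minorant_ge)
  have f_le: "f k \<le> u k" for k
    unfolding f_def using zero nonneg by (rule convex_minorant_le)
  have f_above_affine: "\<alpha> * k - \<beta> \<le> f k" for k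
    unfolding f_def using affine above_affine by (rule convex_minorant_ge)
  have f_bot: "(f \<longlongrightarrow> 0) at_bot"
    by (rule tendsto_sandwich[OF _ _ tendsto_const bot]) (use f_nonneg f_le in auto)
  have f_top: "((\<lambda>k. f k - (\<alpha> * k - \<beta>)) \<longlongrightarrow> 0) at_top"
    by (rule tendsto_sandwich[OF _ _ tendsto_const top]) (use f_above_affine f_le in auto)
  have "mono f"
    using convex f_bot by (rule convex_on_tendsto_at_bot_imp_mono)
  with convex f_nonneg f_bot f_top show ?thesis
    unfolding classD_def f_def by blast
qed

definition call_fn :: "real measure \<Rightarrow> real \<Rightarrow> real" where
  "call_fn M k = (\<integral>x. max (x - k) 0 \<partial>M)"

lemma fin_meas_fmD:
  assumes "fin_meas_fm M"
  shows "finite_measure M" "integrable M (\<lambda>x. x)" "space M = UNIV"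
  using assms sets_eq_imp_space_eq[of M borel] unfolding fin_meas_fm_def by auto

lemma integrable_pos_part_affine:
  assumes "fin_meas_fm M"
  shows "integrable M (\<lambda>x. max (a * x + b) 0)"
proof -
  interpret finite_measure M
    using assms by (rule fin_meas_fmD)
  show ?thesis
    using fin_meas_fmD(2)[OF assms] by (intro integrable_max integrable_add integrable_mult_right) auto
qed

lemma ext_cx_le_integral_le:
  assumes "ext_cx_le \<mu> \<nu>" "convex_on UNIV f" "\<And>x. 0 \<le> f x"
    and "integrable \<mu> f" "integrable \<nu> f"
  shows "(\<integral>x. f x \<partial>\<mu>) \<le> (\<integral>x. f x \<partial>\<nu>)"
proof -
  have "ennreal (\<integral>x. f x \<partial>\<mu>) = (\<integral>\<^sup>+ x. ennreal (f x) \<partial>\<mu>)"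
    using assms by (intro nn_integral_eq_integral[symmetric]) auto
  also have "\<dots> \<le> (\<integral>\<^sup>+ x. ennreal (f x) \<partial>\<nu>)"
    using assms unfolding ext_cx_le_def by blast
  also have "\<dots> = ennreal (\<integral>x. f x \<partial>\<nu>)"
    using assms by (intro nn_integral_eq_integral) auto
  finally show ?thesis
    using assms by (simp add: ennreal_le_iff integral_nonneg)
qed

lemma ext_cx_le_pos_part_affine:
  assumes "fin_meas_fm \<mu>" "fin_meas_fm \<nu>" "ext_cx_le \<mu> \<nu>"
  shows "(\<integral>x. max (a * x + b) 0 \<partial>\<mu>) \<le> (\<integral>x. max (a * x + b) 0 \<partial>\<nu>)"
  using assms by (intro ext_cx_le_integral_le convex_on_pos_part_affine integrable_pos_part_affine) auto

lemma put_fn_mono_ext_cx_le: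
  assumes "fin_meas_fm \<mu>" "fin_meas_fm \<nu>" "ext_cx_le \<mu> \<nu>"
  shows "put_fn \<mu> k \<le> put_fn \<nu> k"
  using ext_cx_le_pos_part_affine[OF assms, of "-1" k] unfolding put_fn_def by simp

lemma call_fn_mono_ext_cx_le:
  assumes "fin_meas_fm \<mu>" "fin_meas_fm \<nu>" "ext_cx_le \<mu> \<nu>"
  shows "call_fn \<mu> k \<le> call_fn \<nu> k"
  using ext_cx_le_pos_part_affine[OF assms, of 1 "-k"] unfolding call_fn_def by simp

lemma put_call_parity:
  assumes "fin_meas_fm M"
  shows "put_fn M k = k * measure M UNIV - bary M + call_fn M k"
proof -
  interpret finite_measure M
    using assms by (rule fin_meas_fmD)
  have id: "integrable M (\<lambda>x. x)" and space: "space M = UNIV"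
    using fin_meas_fmD[OF assms] by auto
  have call: "integrable M (\<lambda>x. max (x - k) 0)"
    using integrable_pos_part_affine[OF assms, of 1 "-k"] by simp
  have "put_fn M k = (\<integral>x. (k - x) + max (x - k) 0 \<partial>M)"
    unfolding put_fn_def by (rule Bochner_Integration.integral_cong) auto
  also have "\<dots> = (\<integral>x. k \<partial>M) - (\<integral>x. x \<partial>M) + call_fn M k"
    unfolding call_fn_def using id call by simp
  also have "\<dots> = k * measure M UNIV - bary M + call_fn M k"
    using space by (simp add: bary_def)
  finally show ?thesis .
qed

lemma integral_pos_part_shift_tendsto_zero:
  fixes g :: "'a \<Rightarrow> real"
  assumes "integrable M g"
  shows "((\<lambda>t. \<integral>x. max (g x - t) 0 \<partial>M) \<longlongrightarrow> 0) at_top"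
proof -
  have "((\<lambda>t. \<integral>x. max (g x - t) 0 \<partial>M) \<longlongrightarrow> (\<integral>x. 0 \<partial>M)) at_top"
  proof (rule integral_dominated_convergence_at_top[where w="\<lambda>x. \<bar>g x\<bar>"])
    show "\<And>t. (\<lambda>x. max (g x - t) 0) \<in> borel_measurable M"
      using borel_measurable_integrable[OF assms] by measurable
    show "AE x in M. ((\<lambda>t. max (g x - t) 0) \<longlongrightarrow> 0) at_top"
    proof (intro AE_I2 tendsto_eventually)
      fix x
      show "\<forall>\<^sub>F t in at_top. max (g x - t) 0 = 0"
        using eventually_ge_at_top[of "g x"] by eventually_elim auto
    qed
    show "\<forall>\<^sub>F t in at_top. AE x in M. norm (max (g x - t) 0) \<le> \<bar>g x\<bar>"
      using eventually_ge_at_top[of "0::real"] by eventually_elim auto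
  qed (use assms in auto)
  then show ?thesis
    by simp
qed

lemma call_fn_tendsto_at_top:
  assumes "fin_meas_fm M"
  shows "(call_fn M \<longlongrightarrow> 0) at_top"
  unfolding call_fn_def using fin_meas_fmD(2)[OF assms]
  by (rule integral_pos_part_shift_tendsto_zero)

lemma put_fn_tendsto_at_bot:
  assumes "fin_meas_fm M"
  shows "(put_fn M \<longlongrightarrow> 0) at_bot"
proof -
  have "(\<lambda>t. put_fn M (- t)) = (\<lambda>t. \<integral>x. max (- x - t) 0 \<partial>M)"
    unfolding put_fn_def by (intro ext Bochner_Integration.integral_cong) auto
  moreover have "((\<lambda>t. \<integral>x. max (- x - t) 0 \<partial>M) \<longlongrightarrow> 0) at_top"
    using fin_meas_fmD(2)[OF assms] by (intro integral_pos_part_shift_tendsto_zero) auto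
  ultimately show ?thesis
    unfolding filterlim_at_bot_mirror by simp
qed

theorem corollary2p5:
  fixes \<mu> \<nu> :: "real measure"
  assumes "fin_meas_fm \<mu>" and "fin_meas_fm \<nu>" and "ext_cx_le \<mu> \<nu>"
  shows "convex_minorant (\<lambda>k. put_fn \<nu> k - put_fn \<mu> k)
           \<in> classD (measure \<nu> UNIV - measure \<mu> UNIV) (bary \<nu> - bary \<mu>)"
proof (rule convex_minorant_in_classD)
  let ?\<alpha> = "measure \<nu> UNIV - measure \<mu> UNIV" and ?\<beta> = "bary \<nu> - bary \<mu>"
  have parity: "put_fn \<nu> k - put_fn \<mu> k - (?\<alpha> * k - ?\<beta>) = call_fn \<nu> k - call_fn \<mu> k" for k
    by (simp add: put_call_parity[OF assms(1)] put_call_parity[OF assms(2)] algebra_simps)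
  show "0 \<le> put_fn \<nu> k - put_fn \<mu> k" for k
    using put_fn_mono_ext_cx_le[OF assms] by simp
  show "?\<alpha> * k - ?\<beta> \<le> put_fn \<nu> k - put_fn \<mu> k" for k
    using parity[of k] call_fn_mono_ext_cx_le[OF assms, of k] by simp
  show "((\<lambda>k. put_fn \<nu> k - put_fn \<mu> k) \<longlongrightarrow> 0) at_bot"
    using tendsto_diff[OF put_fn_tendsto_at_bot[OF assms(2)] put_fn_tendsto_at_bot[OF assms(1)]]
    by simp
  show "((\<lambda>k. put_fn \<nu> k - put_fn \<mu> k - (?\<alpha> * k - ?\<beta>)) \<longlongrightarrow> 0) at_top"
    unfolding parity
    using tendsto_diff[OF call_fn_tendsto_at_top[OF assms(2)] call_fn_tendsto_at_top[OF assms(1)]]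
    by simp
qed

end
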